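(* Let $b\ge3$, $2\le j\le b-1$, let $q\in[0,\infty)^b$ with $q_1\le q_2\le\dots\le q_{j-1}$, and let $0\le\alpha<1$. Let $p=(p_1,\dots,p_{j-1},0,\dots,0)$ be a probability vector in $\mathbb R^b$ (i.e. $p_i=0$ for $i\ge j$) with $p_i\le1-\alpha$ for all $i$. Then $$\Psi_j(p_1,\dots,p_{j-1},0,\dots,0;\,q_1,\dots,q_b)\le\Psi_j(1-\alpha,\alpha,0,\dots,0;\,q_1,\dots,q_b).$$
   Context: For an integer $1\le j\le b-1$ and vectors $p,q\in\mathbb R^b$, $$\Psi_j(p;q)=\frac{1}{(b-j-1)!}\sum_{\sigma\in S_b}\Big(p_{\sigma(1)}\cdots p_{\sigma(j)}\,q_{\sigma(j+1)}+q_{\sigma(1)}\cdots q_{\sigma(j)}\,p_{\sigma(j+1)}\Big),$$ where $S_b$ is the set of permutations of $\{1,\dots,b\}$; the first $b$ arguments form $p$ and the last $b$ form $q$. *)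

theory Defs
  imports Complex_Main "HOL-Combinatorics.Permutations"
begin

text \<open>Vectors in R^b are functions nat => real, indexed by 1..b (values outside are irrelevant).\<close>

definition Psi :: "nat \<Rightarrow> nat \<Rightarrow> (nat \<Rightarrow> real) \<Rightarrow> (nat \<Rightarrow> real) \<Rightarrow> real" where
  "Psi b j p q = (1 / fact (b - j - 1)) *
     (\<Sum>\<sigma> \<in> {\<sigma>. \<sigma> permutes {1..b}}.
        (\<Prod>i=1..j. p (\<sigma> i)) * q (\<sigma> (j+1)) + (\<Prod>i=1..j. q (\<sigma> i)) * p (\<sigma> (j+1)))"

end

theory Submission
  imports Defs
begin

text \<open>Grouping the permutations by \<open>k = \<sigma>(j+1)\<close> writes the second half of \<open>\<Psi>_j(p;q)\<close> as
  \<open>\<Sum>_k p_k F(k)\<close>, where \<open>F(k)\<close> sums \<open>q_\<sigma>(1) \<cdots> q_\<sigma>(j)\<close> over the permutations with \<open>\<sigma>(j+1) = k\<close>.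
  Composing with the transposition of \<open>k\<close> and \<open>l\<close> shows that \<open>F\<close> is antitone in \<open>q\<close>, so
  \<open>F(1) \<ge> \<dots> \<ge> F(j-1)\<close>. If \<open>p\<close> lives on \<open>{1..j-1}\<close>, every product \<open>p_\<sigma>(1) \<cdots> p_\<sigma>(j)\<close> vanishes by
  pigeonhole, so \<open>\<Psi>_j(p;q)\<close> is exactly the average \<open>\<Sum>_k p_k F(k)\<close>. Since \<open>p_1 \<le> 1-\<alpha>\<close>, this average
  is at most \<open>(1-\<alpha>) F(1) + \<alpha> F(2)\<close>, which is already dominated by the second half of
  \<open>\<Psi>_j(1-\<alpha>,\<alpha>,0,\<dots>;q)\<close>.\<close>

definition Psi_coeff :: "nat \<Rightarrow> nat \<Rightarrow> (nat \<Rightarrow> real) \<Rightarrow> nat \<Rightarrow> real" where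
  "Psi_coeff b j q k = (\<Sum>\<sigma> \<in> {\<sigma>. \<sigma> permutes {1..b} \<and> \<sigma> (j+1) = k}. \<Prod>i=1..j. q (\<sigma> i))"

lemma Psi_coeff_antimono:
  assumes "j < b" and "k \<in> {1..b}" and "l \<in> {1..b}" and "q k \<le> q l"
    and q_nonneg: "\<forall>i\<in>{1..b}. q i \<ge> 0"
  shows "Psi_coeff b j q l \<le> Psi_coeff b j q k"
proof -
  let ?t = "transpose k l"
  let ?S = "\<lambda>m. {\<sigma>. \<sigma> permutes {1..b} \<and> \<sigma> (j+1) = m}"
  have t_permutes: "?t permutes {1..b}"
    using assms(2,3) by (intro permutes_swap_id) auto
  have "Psi_coeff b j q l = (\<Sum>\<sigma>\<in>?S k. \<Prod>i=1..j. q (?t (\<sigma> i)))"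
    unfolding Psi_coeff_def
    by (rule sum.reindex_bij_witness[of _ "\<lambda>\<sigma>. ?t \<circ> \<sigma>" "\<lambda>\<sigma>. ?t \<circ> \<sigma>"])
       (use t_permutes permutes_compose[of _ "{1..b}" ?t] in \<open>auto simp: fun_eq_iff\<close>)
  also have "\<dots> \<le> (\<Sum>\<sigma>\<in>?S k. \<Prod>i=1..j. q (\<sigma> i))"
  proof (intro sum_mono prod_mono conjI)
    fix \<sigma> i assume \<sigma>: "\<sigma> \<in> ?S k" and i: "i \<in> {1..j}"
    then have \<sigma>_permutes: "\<sigma> permutes {1..b}" and \<sigma>_k: "\<sigma> (j+1) = k" by auto
    have "\<sigma> i \<in> {1..b}"
      using i \<open>j < b\<close> permutes_in_image[OF \<sigma>_permutes] by auto
    moreover have "\<sigma> i \<noteq> \<sigma> (j+1)"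
      using i permutes_inj[OF \<sigma>_permutes] by (simp add: inj_eq)
    then have "?t (\<sigma> i) = (if \<sigma> i = l then k else \<sigma> i)"
      using \<sigma>_k by (simp add: transpose_def)
    ultimately show "q (?t (\<sigma> i)) \<le> q (\<sigma> i)" and "0 \<le> q (?t (\<sigma> i))"
      using assms(2,4) q_nonneg by auto
  qed
  finally show ?thesis
    unfolding Psi_coeff_def .
qed

lemma sum_permutes_group_by_image:
  assumes "j < b"
  shows "(\<Sum>\<sigma> \<in> {\<sigma>. \<sigma> permutes {1..b}}. (\<Prod>i=1..j. q (\<sigma> i)) * p (\<sigma> (j+1)))
       = (\<Sum>k=1..b. p k * Psi_coeff b j q k)"
proof -
  have "(\<Sum>\<sigma> \<in> {\<sigma>. \<sigma> permutes {1..b}}. (\<Prod>i=1..j. q (\<sigma> i)) * p (\<sigma> (j+1)))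
      = (\<Sum>k=1..b. \<Sum>\<sigma>\<in>{\<sigma>\<in>{\<sigma>. \<sigma> permutes {1..b}}. \<sigma> (j+1) = k}.
                    (\<Prod>i=1..j. q (\<sigma> i)) * p (\<sigma> (j+1)))"
    by (rule sum.group[symmetric])
       (use finite_permutations[of "{1..b}"] assms permutes_in_image[of _ "{1..b}" "j+1"]
         in \<open>auto\<close>)
  also have "\<dots> = (\<Sum>k=1..b. p k * Psi_coeff b j q k)"
    unfolding Psi_coeff_def sum_distrib_left by (intro sum.cong refl) (auto simp: mult.commute)
  finally show ?thesis .
qed

lemma prod_permutes_eq_0_if_vanishes_from:
  fixes b j :: nat and p :: "nat \<Rightarrow> real"
  assumes "\<sigma> permutes {1..b}" and "1 \<le> j" and "j \<le> b" and "\<forall>i\<in>{j..b}. p i = 0"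
  shows "(\<Prod>i=1..j. p (\<sigma> i)) = 0"
proof -
  have "\<not> \<sigma> ` {1..j} \<subseteq> {1..j-1}"
  proof
    assume "\<sigma> ` {1..j} \<subseteq> {1..j-1}"
    then have "card (\<sigma> ` {1..j}) \<le> j - 1"
      using card_mono[of "{1..j-1}"] by fastforce
    moreover have "card (\<sigma> ` {1..j}) = j"
      using card_image[OF permutes_inj_on[OF assms(1)]] by simp
    ultimately show False
      using \<open>1 \<le> j\<close> by simp
  qed
  then obtain i where i: "i \<in> {1..j}" and "\<sigma> i \<notin> {1..j-1}"
    by blast
  moreover have "\<sigma> i \<in> {1..b}"
    using i assms(3) permutes_in_image[OF assms(1)] by auto
  ultimately have "p (\<sigma> i) = 0"
    using assms(4) by auto
  then show ?thesis
    using i by (intro prod_zero) auto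
qed

lemma Psi_eq_Psi_coeff_sum_if_vanishes_from:
  assumes "1 \<le> j" and "j < b" and "\<forall>i\<in>{j..b}. p i = 0"
  shows "Psi b j p q = (\<Sum>k=1..b. p k * Psi_coeff b j q k) / fact (b - j - 1)"
proof -
  have "(\<Sum>\<sigma> \<in> {\<sigma>. \<sigma> permutes {1..b}}.
          (\<Prod>i=1..j. p (\<sigma> i)) * q (\<sigma> (j+1)) + (\<Prod>i=1..j. q (\<sigma> i)) * p (\<sigma> (j+1)))
      = (\<Sum>\<sigma> \<in> {\<sigma>. \<sigma> permutes {1..b}}. (\<Prod>i=1..j. q (\<sigma> i)) * p (\<sigma> (j+1)))"
    using prod_permutes_eq_0_if_vanishes_from[of _ b j p] assms by (intro sum.cong) auto
  then show ?thesis
    unfolding Psi_def sum_permutes_group_by_image[OF \<open>j < b\<close>] by simp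
qed

lemma Psi_coeff_sum_le_Psi:
  assumes "j < b" and "\<forall>i\<in>{1..b}. p i \<ge> 0" and "\<forall>i\<in>{1..b}. q i \<ge> 0"
  shows "(\<Sum>k=1..b. p k * Psi_coeff b j q k) / fact (b - j - 1) \<le> Psi b j p q"
proof -
  have "(\<Sum>\<sigma> \<in> {\<sigma>. \<sigma> permutes {1..b}}. (\<Prod>i=1..j. q (\<sigma> i)) * p (\<sigma> (j+1)))
      \<le> (\<Sum>\<sigma> \<in> {\<sigma>. \<sigma> permutes {1..b}}.
            (\<Prod>i=1..j. p (\<sigma> i)) * q (\<sigma> (j+1)) + (\<Prod>i=1..j. q (\<sigma> i)) * p (\<sigma> (j+1)))"
  proof (intro sum_mono)
    fix \<sigma> assume "\<sigma> \<in> {\<sigma>. \<sigma> permutes {1..b}}"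
    then have "\<sigma> i \<in> {1..b}" if "i \<le> j + 1" "1 \<le> i" for i
      using that \<open>j < b\<close> permutes_in_image[of \<sigma> "{1..b}" i] by auto
    then have "0 \<le> (\<Prod>i=1..j. p (\<sigma> i)) * q (\<sigma> (j+1))"
      using assms(2,3) by (intro mult_nonneg_nonneg prod_nonneg) auto
    then show "(\<Prod>i=1..j. q (\<sigma> i)) * p (\<sigma> (j+1))
        \<le> (\<Prod>i=1..j. p (\<sigma> i)) * q (\<sigma> (j+1)) + (\<Prod>i=1..j. q (\<sigma> i)) * p (\<sigma> (j+1))"
      by simp
  qed
  then show ?thesis
    unfolding Psi_def sum_permutes_group_by_image[OF \<open>j < b\<close>]
    by (simp add: divide_right_mono)
qed

text \<open>\<open>F 2 \<le> F 1\<close> is needed only when the cap \<open>p 1 \<le> 1-\<alpha>\<close> is strict. This covers the case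
  \<open>j = 2\<close> of the theorem, where \<open>p\<close> sits at \<open>1\<close> and \<open>\<alpha> = 0\<close> but \<open>q 1\<close> and \<open>q 2\<close> are unordered.\<close>

lemma weighted_average_le_two_point:
  fixes p F :: "nat \<Rightarrow> real"
  assumes "2 \<le> b" and "\<forall>k\<in>{1..b}. p k \<ge> 0" and "(\<Sum>k=1..b. p k) = 1"
    and "p 1 \<le> 1 - \<alpha>" and "p 1 < 1 - \<alpha> \<Longrightarrow> F 2 \<le> F 1"
    and "\<forall>k\<in>{2..b}. p k \<noteq> 0 \<longrightarrow> F k \<le> F 2"
  shows "(\<Sum>k=1..b. p k * F k) \<le> (1 - \<alpha>) * F 1 + \<alpha> * F 2"
proof -
  have split_1: "{1..b} = insert 1 {2..b}"
    using \<open>2 \<le> b\<close> by auto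
  have "(\<Sum>k=2..b. p k * F k) \<le> (\<Sum>k=2..b. p k * F 2)"
    using assms(2,6) by (intro sum_mono) (fastforce intro: mult_left_mono)
  also have "\<dots> = (1 - p 1) * F 2"
    using assms(3) unfolding split_1 by (simp add: sum_distrib_right[symmetric])
  finally have "(\<Sum>k=1..b. p k * F k) \<le> p 1 * F 1 + (1 - p 1) * F 2"
    unfolding split_1 by simp
  moreover have "0 \<le> (1 - \<alpha> - p 1) * (F 1 - F 2)"
    using assms(4,5) by (cases "p 1 < 1 - \<alpha>") auto
  ultimately show ?thesis
    by (simp add: algebra_simps)
qed

theorem mainTheorem8:
  fixes b j :: nat and p q :: "nat \<Rightarrow> real" and \<alpha> :: real
  assumes "b \<ge> 3" and "2 \<le> j" and "j \<le> b - 1"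
    and "\<forall>i\<in>{1..b}. q i \<ge> 0"
    and "\<forall>i\<in>{1..j-1}. \<forall>k\<in>{1..j-1}. i \<le> k \<longrightarrow> q i \<le> q k"
    and "0 \<le> \<alpha>" and "\<alpha> < 1"
    and "\<forall>i\<in>{1..b}. p i \<ge> 0"
    and "(\<Sum>i=1..b. p i) = 1"
    and "\<forall>i\<in>{j..b}. p i = 0"
    and "\<forall>i\<in>{1..b}. p i \<le> 1 - \<alpha>"
  shows "Psi b j p q \<le> Psi b j (\<lambda>i. if i = 1 then 1 - \<alpha> else if i = 2 then \<alpha> else 0) q"
proof -
  define p' where "p' = (\<lambda>i::nat. if i = 1 then 1 - \<alpha> else if i = 2 then \<alpha> else 0)"
  define F where "F = Psi_coeff b j q"
  have "j < b" and p1_le: "p 1 \<le> 1 - \<alpha>"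
    using assms(1,3,11) by auto
  have F_antimono: "F l \<le> F k" if "k \<in> {1..j-1}" "l \<in> {1..j-1}" "k \<le> l" for k l
    unfolding F_def using that assms(4,5) \<open>j < b\<close> by (intro Psi_coeff_antimono) auto
  have "p 1 = 1" if "j = 2"
    using that assms(1,9,10) sum.atLeast_Suc_atMost[of 1 b p] by (simp add: numeral_2_eq_2)
  then have "F 2 \<le> F 1" if "p 1 < 1 - \<alpha>"
    using that assms(2,6) F_antimono[of 1 2] by (cases "j = 2") auto
  then have "(\<Sum>k=1..b. p k * F k) \<le> (1 - \<alpha>) * F 1 + \<alpha> * F 2"
    using assms(1,8,9,10) p1_le F_antimono[of 2]
    by (intro weighted_average_le_two_point) (auto simp: not_le)
  also have "\<dots> = (\<Sum>k\<in>{1,2}. p' k * F k)"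
    by (simp add: p'_def)
  also have "\<dots> = (\<Sum>k=1..b. p' k * F k)"
    using assms(1) by (intro sum.mono_neutral_left) (auto simp: p'_def)
  finally have "Psi b j p q \<le> (\<Sum>k=1..b. p' k * F k) / fact (b - j - 1)"
    using Psi_eq_Psi_coeff_sum_if_vanishes_from[of j b p q] assms(2,10) \<open>j < b\<close>
    unfolding F_def by (simp add: divide_right_mono)
  also have "\<dots> \<le> Psi b j p' q"
    unfolding F_def using assms(4,6,7) \<open>j < b\<close> by (intro Psi_coeff_sum_le_Psi) (auto simp: p'_def)
  finally show ?thesis
    unfolding p'_def .
qed

end
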